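(* Let $A$ be an operator algebra with a right contractive approximate identity which has property $(\mathcal R)$. Then $\mathcal R(A)$ is a norm closed right ideal of $A$ (hence an operator algebra) with a two-sided contractive approximate identity. Moreover $\mathcal R(A)$ does not depend on the particular right contractive approximate identity witnessing property $(\mathcal R)$ used to define it. Also $A\,\mathcal R(A)=A$ and $\mathcal R(A)\,A=\mathcal R(A)$. The analogous statements hold for property $(\mathcal L)$ and $\mathcal L(A)$ (with left and right interchanged).
   Context: An operator algebra is a (complete) algebra with matrix norms completely isometrically isomorphic, via a homomorphism, to a closed subalgebra of some $B(H)$. A right (left) contractive approximate identity is a net $\{e_\alpha\}$ in the unit ball with $ae_\alpha\to a$ ($e_\alpha a\to a$) for all $a$. $A$ has property $(\mathcal R)$ if there is a right contractive approximate identity $\{e_\alpha\}$ with $e_\alpha e_{\alpha'}\to e_{\alpha'}$ (limit in $\alpha$) for each fixed $\alpha'$; then $\mathcal R(A)=\{x\in A: e_\alpha x\to x\}$. Property $(\mathcal L)$: a left contractive approximate identity with $e_{\alpha'}e_\alpha\to e_{\alpha'}$ for each fixed $\alpha'$; $\mathcal L(A)=\{x\in A: xe_\alpha\to x\}$. For subsets $X,Y$, $XY$ denotes the norm closure of the span of products $xy$. *)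

theory Defs
  imports "HOL-Analysis.Analysis"
begin

text \<open>A complex Hilbert space is modelled as a real Hilbert space 'h
  together with a complex structure J (multiplication by i):
  J is a real-linear isometry-preserving-inner-product with J o J = -1.
  The complex inner product is recovered from the real one.\<close>

definition complex_structure :: "('h::{real_inner,complete_space} \<Rightarrow>\<^sub>L 'h) \<Rightarrow> bool" where
  "complex_structure J \<longleftrightarrow> J o\<^sub>L J = - id_blinfun \<and> (\<forall>x y. inner (J x) (J y) = inner x y)"

text \<open>B(H): the complex-linear bounded operators, i.e. those commuting with J.\<close>
definition cops :: "('h::{real_inner,complete_space} \<Rightarrow>\<^sub>L 'h) \<Rightarrow> ('h \<Rightarrow>\<^sub>L 'h) set" where
  "cops J = {T. T o\<^sub>L J = J o\<^sub>L T}"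

text \<open>complex linear span: real span of S and i*S\<close>
definition cspan :: "('h::{real_inner,complete_space} \<Rightarrow>\<^sub>L 'h) \<Rightarrow> ('h \<Rightarrow>\<^sub>L 'h) set \<Rightarrow> ('h \<Rightarrow>\<^sub>L 'h) set" where
  "cspan J S = span (S \<union> (\<lambda>T. J o\<^sub>L T) ` S)"

definition csubspace :: "('h::{real_inner,complete_space} \<Rightarrow>\<^sub>L 'h) \<Rightarrow> ('h \<Rightarrow>\<^sub>L 'h) set \<Rightarrow> bool" where
  "csubspace J S \<longleftrightarrow> subspace S \<and> (\<forall>T\<in>S. J o\<^sub>L T \<in> S)"

definition operator_algebra :: "('h::{real_inner,complete_space} \<Rightarrow>\<^sub>L 'h) \<Rightarrow> ('h \<Rightarrow>\<^sub>L 'h) set \<Rightarrow> bool" where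
  "operator_algebra J A \<longleftrightarrow> complex_structure J \<and> A \<subseteq> cops J \<and> csubspace J A \<and> closed A
     \<and> (\<forall>S\<in>A. \<forall>T\<in>A. S o\<^sub>L T \<in> A)"

definition setprod :: "('h::{real_inner,complete_space} \<Rightarrow>\<^sub>L 'h) \<Rightarrow> ('h \<Rightarrow>\<^sub>L 'h) set \<Rightarrow> ('h \<Rightarrow>\<^sub>L 'h) set \<Rightarrow> ('h \<Rightarrow>\<^sub>L 'h) set" where
  "setprod J X Y = closure (cspan J {x o\<^sub>L y | x y. x \<in> X \<and> y \<in> Y})"

text \<open>Nets: a function e on an index type together with a proper filter F
  (e.g. at_top of a directed set).\<close>
definition right_cai :: "('h::{real_inner,complete_space} \<Rightarrow>\<^sub>L 'h) set \<Rightarrow> 'i filter \<Rightarrow> ('i \<Rightarrow> ('h \<Rightarrow>\<^sub>L 'h)) \<Rightarrow> bool" where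
  "right_cai A F e \<longleftrightarrow> F \<noteq> bot \<and> (\<forall>i. e i \<in> A \<and> norm (e i) \<le> 1)
     \<and> (\<forall>a\<in>A. ((\<lambda>i. a o\<^sub>L e i) \<longlongrightarrow> a) F)"

definition left_cai :: "('h::{real_inner,complete_space} \<Rightarrow>\<^sub>L 'h) set \<Rightarrow> 'i filter \<Rightarrow> ('i \<Rightarrow> ('h \<Rightarrow>\<^sub>L 'h)) \<Rightarrow> bool" where
  "left_cai A F e \<longleftrightarrow> F \<noteq> bot \<and> (\<forall>i. e i \<in> A \<and> norm (e i) \<le> 1)
     \<and> (\<forall>a\<in>A. ((\<lambda>i. e i o\<^sub>L a) \<longlongrightarrow> a) F)"

definition two_sided_cai :: "('h::{real_inner,complete_space} \<Rightarrow>\<^sub>L 'h) set \<Rightarrow> 'i filter \<Rightarrow> ('i \<Rightarrow> ('h \<Rightarrow>\<^sub>L 'h)) \<Rightarrow> bool" where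
  "two_sided_cai A F e \<longleftrightarrow> right_cai A F e \<and> left_cai A F e"

definition propR :: "('h::{real_inner,complete_space} \<Rightarrow>\<^sub>L 'h) set \<Rightarrow> 'i filter \<Rightarrow> ('i \<Rightarrow> ('h \<Rightarrow>\<^sub>L 'h)) \<Rightarrow> bool" where
  "propR A F e \<longleftrightarrow> right_cai A F e \<and> (\<forall>j. ((\<lambda>i. e i o\<^sub>L e j) \<longlongrightarrow> e j) F)"

definition propL :: "('h::{real_inner,complete_space} \<Rightarrow>\<^sub>L 'h) set \<Rightarrow> 'i filter \<Rightarrow> ('i \<Rightarrow> ('h \<Rightarrow>\<^sub>L 'h)) \<Rightarrow> bool" where
  "propL A F e \<longleftrightarrow> left_cai A F e \<and> (\<forall>j. ((\<lambda>i. e j o\<^sub>L e i) \<longlongrightarrow> e j) F)"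

definition RR :: "('h::{real_inner,complete_space} \<Rightarrow>\<^sub>L 'h) set \<Rightarrow> 'i filter \<Rightarrow> ('i \<Rightarrow> ('h \<Rightarrow>\<^sub>L 'h)) \<Rightarrow> ('h \<Rightarrow>\<^sub>L 'h) set" where
  "RR A F e = {x\<in>A. ((\<lambda>i. e i o\<^sub>L x) \<longlongrightarrow> x) F}"

definition LL :: "('h::{real_inner,complete_space} \<Rightarrow>\<^sub>L 'h) set \<Rightarrow> 'i filter \<Rightarrow> ('i \<Rightarrow> ('h \<Rightarrow>\<^sub>L 'h)) \<Rightarrow> ('h \<Rightarrow>\<^sub>L 'h) set" where
  "LL A F e = {x\<in>A. ((\<lambda>i. x o\<^sub>L e i) \<longlongrightarrow> x) F}"

definition right_ideal :: "('h::{real_inner,complete_space} \<Rightarrow>\<^sub>L 'h) \<Rightarrow> ('h \<Rightarrow>\<^sub>L 'h) set \<Rightarrow> ('h \<Rightarrow>\<^sub>L 'h) set \<Rightarrow> bool" where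
  "right_ideal J A R \<longleftrightarrow> R \<subseteq> A \<and> csubspace J R \<and> (\<forall>x\<in>R. \<forall>a\<in>A. x o\<^sub>L a \<in> R)"

definition left_ideal :: "('h::{real_inner,complete_space} \<Rightarrow>\<^sub>L 'h) \<Rightarrow> ('h \<Rightarrow>\<^sub>L 'h) set \<Rightarrow> ('h \<Rightarrow>\<^sub>L 'h) set \<Rightarrow> bool" where
  "left_ideal J A R \<longleftrightarrow> R \<subseteq> A \<and> csubspace J R \<and> (\<forall>x\<in>R. \<forall>a\<in>A. a o\<^sub>L x \<in> R)"

end

theory Submission
  imports Defs
begin

(* The analytic core is an estimate for contractions E, T, P on a real inner product space:
   if ||EP - P|| and ||ET - E|| are small, then so is ||TP - P||. It follows by expanding
   ||E (s (y - T y) - y)||^2 <= ||s (y - T y) - y||^2 for y = P x and a small s > 0.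
   Given two nets e, f witnessing property (R), take E = e_i, T = f_k, P = e_j: since
   e_i e_j -> e_j and e_i f_k -> e_i, also f_k e_j -> e_j. So f_k x -> x for every x = e_j y;
   the set of such x is closed, and every x in R(A) is the limit of e_j x, so R(A) does not
   depend on the net. The remaining assertions follow from the definitions, e itself being a
   two-sided approximate identity of R(A). The left-hand version reduces to the right-hand one
   by taking Hilbert space adjoints, which exist by the Riesz representation theorem. *)

lemma norm_diff_squared_parallelogram:
  fixes a b :: "'a::real_inner"
  shows "(norm (a - b))\<^sup>2 = 2 * (norm a)\<^sup>2 + 2 * (norm b)\<^sup>2 - (norm (a + b))\<^sup>2"
  by (simp add: power2_norm_eq_inner inner_add_left inner_add_right inner_diff_left
      inner_diff_right inner_commute)

lemma convex_minimizing_sequence_Cauchy: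
  fixes m :: "nat \<Rightarrow> 'a::real_inner"
  assumes "convex M" "\<And>k. m k \<in> M" "\<And>y. y \<in> M \<Longrightarrow> d \<le> (norm y)\<^sup>2"
    and "\<And>k. (norm (m k))\<^sup>2 < d + 1 / Suc k"
  shows "Cauchy m"
proof (rule metric_CauchyI)
  have dist_m: "(norm (m p - m q))\<^sup>2 \<le> 2 / Suc p + 2 / Suc q" for p q
  proof -
    have "(1/2) *\<^sub>R (m p + m q) \<in> M"
      using convexD[OF assms(1,2,2), of "1/2" "1/2"] by (simp add: scaleR_add_right)
    then have "d \<le> (norm ((1/2) *\<^sub>R (m p + m q)))\<^sup>2" by (rule assms(3))
    then have "4 * d \<le> (norm (m p + m q))\<^sup>2" by (simp add: power2_eq_square)
    then show ?thesis
      using norm_diff_squared_parallelogram[of "m p" "m q"] assms(4)[of p] assms(4)[of q]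
      by linarith
  qed
  fix \<epsilon> :: real assume "\<epsilon> > 0"
  obtain N where "4 / \<epsilon>\<^sup>2 < real N" using reals_Archimedean2 by blast
  then have N: "4 / \<epsilon>\<^sup>2 < real (Suc N)" by simp
  show "\<exists>N. \<forall>p\<ge>N. \<forall>q\<ge>N. dist (m p) (m q) < \<epsilon>"
  proof (intro exI allI impI)
    fix p q assume "N \<le> p" "N \<le> q"
    then have "2 / Suc p \<le> 2 / real (Suc N)" "2 / Suc q \<le> 2 / real (Suc N)"
      by (simp_all add: frac_le)
    then have "2 / Suc p + 2 / Suc q \<le> 4 / real (Suc N)" by simp
    also have "\<dots> < \<epsilon>\<^sup>2" using N \<open>\<epsilon> > 0\<close> by (simp add: field_simps)
    finally have "(norm (m p - m q))\<^sup>2 < \<epsilon>\<^sup>2" using dist_m[of p q] by linarith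
    then show "dist (m p) (m q) < \<epsilon>"
      using \<open>\<epsilon> > 0\<close> by (simp add: dist_norm power2_less_imp_less)
  qed
qed

lemma closed_convex_min_norm:
  fixes M :: "'a::{real_inner,complete_space} set"
  assumes "closed M" "convex M" "M \<noteq> {}"
  obtains z where "z \<in> M" "\<And>y. y \<in> M \<Longrightarrow> norm z \<le> norm y"
proof -
  define d where "d = Inf ((\<lambda>x. (norm x)\<^sup>2) ` M)"
  have bdd: "bdd_below ((\<lambda>x. (norm x)\<^sup>2) ` M)"
    by (intro bdd_belowI[of _ 0]) auto
  have d_le: "d \<le> (norm y)\<^sup>2" if "y \<in> M" for y
    unfolding d_def using that bdd by (intro cInf_lower) auto
  have "\<exists>m\<in>M. (norm m)\<^sup>2 < d + 1 / Suc k" for k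
    using cInf_lessD[of "(\<lambda>x. (norm x)\<^sup>2) ` M" "d + 1 / Suc k"] \<open>M \<noteq> {}\<close>
    by (auto simp: d_def)
  then obtain m where m: "\<And>k. m k \<in> M" "\<And>k. (norm (m k))\<^sup>2 < d + 1 / Suc k"
    by metis
  then have "Cauchy m"
    using \<open>convex M\<close> d_le by (intro convex_minimizing_sequence_Cauchy)
  then obtain z where lim: "m \<longlonglongrightarrow> z" using Cauchy_convergent_iff convergent_def by blast
  have "z \<in> M" using \<open>closed M\<close> m(1) lim by (rule closed_sequentially)
  have "(\<lambda>k. d + 1 / Suc k) \<longlonglongrightarrow> d + 0"
    by (intro tendsto_add tendsto_const LIMSEQ_Suc[OF lim_inverse_n'])
  moreover have "(\<lambda>k. (norm (m k))\<^sup>2) \<longlonglongrightarrow> (norm z)\<^sup>2"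
    by (intro tendsto_intros lim)
  ultimately have "(norm z)\<^sup>2 \<le> d"
    using m(2) by (auto intro: LIMSEQ_le less_imp_le)
  then have "(norm z)\<^sup>2 \<le> (norm y)\<^sup>2" if "y \<in> M" for y
    using d_le[OF that] by linarith
  then show thesis
    using \<open>z \<in> M\<close> by (intro that) (auto intro: power2_le_imp_le)
qed

lemma riesz_representation:
  fixes \<phi> :: "'a::{real_inner,complete_space} \<Rightarrow> real"
  assumes "bounded_linear \<phi>"
  shows "\<exists>z. \<forall>x. \<phi> x = x \<bullet> z"
proof (cases "\<forall>x. \<phi> x = 0")
  case True
  then show ?thesis by (intro exI[of _ 0]) simp
next
  case False
  interpret bounded_linear \<phi> by fact
  define M where "M = \<phi> -` {1}"
  from False obtain x1 where "\<phi> x1 \<noteq> 0" by blast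
  then have "(1 / \<phi> x1) *\<^sub>R x1 \<in> M" by (simp add: M_def scale)
  moreover have "closed M"
    unfolding M_def by (intro continuous_closed_vimage closed_singleton linear_continuous_at assms)
  moreover have "convex M"
    unfolding M_def by (intro convex_linear_vimage linear_axioms convex_singleton)
  ultimately obtain z where "z \<in> M" and z_min: "\<And>y. y \<in> M \<Longrightarrow> norm z \<le> norm y"
    using closed_convex_min_norm by blast
  then have "\<phi> z = 1" by (simp add: M_def)
  then have "z \<noteq> 0" by auto
  have z_orth: "z \<bullet> n = 0" if "\<phi> n = 0" for n
  proof (cases "n = 0")
    case False
    define t where "t = - (z \<bullet> n) / (n \<bullet> n)"
    have "n \<bullet> n > 0" using False by simp
    have "z + t *\<^sub>R n \<in> M" using \<open>\<phi> z = 1\<close> that by (simp add: M_def add scale)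
    then have "(norm z)\<^sup>2 \<le> (norm (z + t *\<^sub>R n))\<^sup>2" using z_min by (simp add: power_mono)
    then have "0 \<le> 2 * t * (z \<bullet> n) + t * t * (n \<bullet> n)"
      by (simp add: power2_norm_eq_inner inner_add_left inner_add_right inner_commute
          algebra_simps)
    also have "\<dots> = - ((z \<bullet> n) * (z \<bullet> n)) / (n \<bullet> n)"
      using \<open>n \<bullet> n > 0\<close> by (simp add: t_def field_simps)
    finally show ?thesis
      using \<open>n \<bullet> n > 0\<close> by (auto simp: divide_le_0_iff mult_le_0_iff)
  qed simp
  show ?thesis
  proof (intro exI allI)
    fix x
    have "\<phi> (x - \<phi> x *\<^sub>R z) = 0" using \<open>\<phi> z = 1\<close> by (simp add: diff scale)
    then have "z \<bullet> (x - \<phi> x *\<^sub>R z) = 0" by (rule z_orth)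
    then have "x \<bullet> z = \<phi> x * (z \<bullet> z)" by (simp add: inner_diff_right inner_commute)
    then show "\<phi> x = x \<bullet> ((1 / (z \<bullet> z)) *\<^sub>R z)"
      using \<open>z \<noteq> 0\<close> by simp
  qed
qed

lemma adjoint_blinfun_inner:
  fixes T :: "'a::{real_inner,complete_space} \<Rightarrow>\<^sub>L 'b::real_inner"
  shows "x \<bullet> adjoint T y = T x \<bullet> y"
proof -
  have "\<exists>z. \<forall>x. T x \<bullet> y = x \<bullet> z" for y
  proof -
    have "bounded_linear (\<lambda>x. T x \<bullet> y)"
      by (intro bounded_linear_compose[OF bounded_linear_inner_left] blinfun.bounded_linear_right)
    then show ?thesis by (rule riesz_representation)
  qed
  then obtain g where "\<forall>x y. T x \<bullet> y = x \<bullet> g y" by metis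
  moreover from this have "adjoint T = g" by (rule adjoint_unique)
  ultimately show ?thesis by simp
qed

lemma norm_adjoint_blinfun_le:
  fixes T :: "'a::{real_inner,complete_space} \<Rightarrow>\<^sub>L 'b::real_inner"
  shows "norm (adjoint T y) \<le> norm T * norm y"
proof -
  have "(norm (adjoint T y))\<^sup>2 = T (adjoint T y) \<bullet> y"
    by (simp add: power2_norm_eq_inner adjoint_blinfun_inner)
  also have "\<dots> \<le> norm (T (adjoint T y)) * norm y" by (rule norm_cauchy_schwarz)
  also have "\<dots> \<le> norm T * norm (adjoint T y) * norm y"
    by (intro mult_right_mono norm_blinfun) simp
  finally show ?thesis
    by (cases "adjoint T y = 0") (simp_all add: power2_eq_square ac_simps)
qed

lemma bounded_linear_adjoint_blinfun:
  fixes T :: "'a::{real_inner,complete_space} \<Rightarrow>\<^sub>L 'b::real_inner"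
  shows "bounded_linear (adjoint T)"
proof (rule bounded_linear_intro[where K="norm T"])
  show "adjoint T (y + y') = adjoint T y + adjoint T y'" for y y'
    by (rule vector_eq_ldot[THEN iffD1]) (simp add: adjoint_blinfun_inner inner_add_right)
  show "adjoint T (r *\<^sub>R y) = r *\<^sub>R adjoint T y" for r y
    by (rule vector_eq_ldot[THEN iffD1]) (simp add: adjoint_blinfun_inner)
  show "norm (adjoint T y) \<le> norm y * norm T" for y
    using norm_adjoint_blinfun_le by (simp add: mult.commute)
qed

definition blinfun_adj :: "('a::{real_inner,complete_space} \<Rightarrow>\<^sub>L 'b::real_inner) \<Rightarrow> 'b \<Rightarrow>\<^sub>L 'a"
  where "blinfun_adj T = Blinfun (adjoint T)"

lemma blinfun_adj_inner [simp]: "x \<bullet> blinfun_adj T y = T x \<bullet> y"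
  by (simp add: blinfun_adj_def bounded_linear_Blinfun_apply[OF bounded_linear_adjoint_blinfun]
      adjoint_blinfun_inner)

lemma blinfun_adj_unique:
  fixes T :: "'a::{real_inner,complete_space} \<Rightarrow>\<^sub>L 'b::real_inner" and U :: "'b \<Rightarrow>\<^sub>L 'a"
  assumes "\<And>x y. T x \<bullet> y = x \<bullet> U y"
  shows "blinfun_adj T = U"
proof -
  have "adjoint T = U" using assms by (intro adjoint_unique) simp
  then show ?thesis by (simp add: blinfun_adj_def blinfun_apply_inverse)
qed

lemma blinfun_adj_adj [simp]:
  fixes T :: "'a::{real_inner,complete_space} \<Rightarrow>\<^sub>L 'b::{real_inner,complete_space}"
  shows "blinfun_adj (blinfun_adj T) = T"
  by (rule blinfun_adj_unique) (simp add: inner_commute)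

lemma blinfun_adj_compose:
  fixes S :: "'b::{real_inner,complete_space} \<Rightarrow>\<^sub>L 'c::real_inner"
    and T :: "'a::{real_inner,complete_space} \<Rightarrow>\<^sub>L 'b"
  shows "blinfun_adj (S o\<^sub>L T) = blinfun_adj T o\<^sub>L blinfun_adj S"
  by (rule blinfun_adj_unique) simp

lemma norm_blinfun_adj_le: "norm (blinfun_adj T) \<le> norm T"
  by (rule norm_blinfun_bound) (simp_all add: blinfun_adj_def norm_adjoint_blinfun_le
      bounded_linear_Blinfun_apply[OF bounded_linear_adjoint_blinfun])

lemma bounded_linear_blinfun_adj: "bounded_linear blinfun_adj"
proof (rule bounded_linear_intro[where K=1])
  show "blinfun_adj (S + T) = blinfun_adj S + blinfun_adj T" for S T
    by (rule blinfun_adj_unique) (simp add: blinfun.add_left inner_add_left inner_add_right)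
  show "blinfun_adj (r *\<^sub>R T) = r *\<^sub>R blinfun_adj T" for r T
    by (rule blinfun_adj_unique) (simp add: blinfun.scaleR_left)
  show "norm (blinfun_adj T) \<le> norm T * 1" for T
    using norm_blinfun_adj_le by simp
qed

lemma norm_blinfun_contraction:
  fixes X :: "'a::real_normed_vector \<Rightarrow>\<^sub>L 'b::real_normed_vector"
  assumes "norm X \<le> 1" shows "norm (X u) \<le> norm u"
  using norm_blinfun[of X u] mult_right_mono[OF assms norm_ge_zero[of u]] by linarith

lemma contraction_inner_diff_le:
  fixes E :: "'a::real_inner \<Rightarrow>\<^sub>L 'b::real_inner"
  assumes "norm E \<le> 1"
  shows "2 * s * (w \<bullet> \<eta>) - 2 * s * (E w \<bullet> E \<eta>)
    \<le> s\<^sup>2 * (norm w)\<^sup>2 + ((norm \<eta>)\<^sup>2 - (norm (E \<eta>))\<^sup>2)"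
proof -
  have "(norm (E (s *\<^sub>R w - \<eta>)))\<^sup>2 \<le> (norm (s *\<^sub>R w - \<eta>))\<^sup>2"
    using norm_blinfun_contraction[OF assms] by (intro power_mono) auto
  moreover have "E (s *\<^sub>R w - \<eta>) = s *\<^sub>R E w - E \<eta>"
    by (simp add: blinfun.diff_right blinfun.scaleR_right)
  moreover have "0 \<le> s * (s * (E w \<bullet> E w))"
    using mult_nonneg_nonneg[OF zero_le_square[of s] inner_ge_zero[of "E w"]] by (simp add: mult.assoc)
  ultimately show ?thesis unfolding power2_norm_eq_inner
    by (simp add: inner_diff_left inner_diff_right inner_commute power2_eq_square algebra_simps)
qed

lemma contraction_almost_fixes:
  fixes E T :: "'a::real_inner \<Rightarrow>\<^sub>L 'a"
  assumes "norm E \<le> 1" "norm T \<le> 1" and \<eta>: "norm \<eta> \<le> N"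
    and E\<eta>: "norm (E \<eta> - \<eta>) \<le> \<delta> * N" and ET\<eta>: "norm (E (T \<eta>) - E \<eta>) \<le> \<gamma> * N"
    and "s > 0"
  shows "(norm (T \<eta> - \<eta>))\<^sup>2 \<le> 2 * (2 * s + \<delta> / s + \<gamma>) * N\<^sup>2"
proof -
  define w where "w = \<eta> - T \<eta>"
  have "norm (T \<eta>) \<le> norm \<eta>" "norm (E \<eta>) \<le> norm \<eta>"
    using assms(1,2) by (auto intro: norm_blinfun_contraction)
  have T\<eta>: "(norm (T \<eta> - \<eta>))\<^sup>2 \<le> 2 * (w \<bullet> \<eta>)"
    using power_mono[OF \<open>norm (T \<eta>) \<le> norm \<eta>\<close> norm_ge_zero, of 2]
    unfolding power2_norm_eq_inner by (simp add: w_def inner_diff_left inner_diff_right inner_commute)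
  have "(norm \<eta>)\<^sup>2 - (norm (E \<eta>))\<^sup>2 \<le> \<delta> * N * (2 * N)"
  proof -
    have "norm \<eta> - norm (E \<eta>) \<le> \<delta> * N"
      using E\<eta> norm_triangle_ineq3[of "E \<eta>" \<eta>] by (simp add: norm_minus_commute)
    moreover have "norm \<eta> + norm (E \<eta>) \<le> 2 * N"
      using \<eta> \<open>norm (E \<eta>) \<le> norm \<eta>\<close> by linarith
    ultimately have "(norm \<eta> - norm (E \<eta>)) * (norm \<eta> + norm (E \<eta>)) \<le> \<delta> * N * (2 * N)"
      using \<open>norm (E \<eta>) \<le> norm \<eta>\<close> by (intro mult_mono) auto
    then show ?thesis by (simp add: power2_eq_square algebra_simps)
  qed
  moreover have "(norm w)\<^sup>2 \<le> (2 * N)\<^sup>2"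
    using norm_triangle_ineq4[of \<eta> "T \<eta>"] \<eta> \<open>norm (T \<eta>) \<le> norm \<eta>\<close>
    by (intro power_mono) (auto simp: w_def)
  moreover have "E w \<bullet> E \<eta> \<le> \<gamma> * N * N"
  proof -
    have "norm (E w) \<le> \<gamma> * N"
      using ET\<eta> by (simp add: w_def blinfun.diff_right norm_minus_commute)
    then have "norm (E w) * norm (E \<eta>) \<le> \<gamma> * N * N"
      using \<eta> \<open>norm (E \<eta>) \<le> norm \<eta>\<close>
      by (intro mult_mono) (auto intro: order_trans[OF norm_ge_zero])
    then show ?thesis using norm_cauchy_schwarz[of "E w" "E \<eta>"] by linarith
  qed
  ultimately have
    "2 * s * (w \<bullet> \<eta>) \<le> 2 * s * (\<gamma> * N * N) + s\<^sup>2 * (2 * N)\<^sup>2 + \<delta> * N * (2 * N)"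
    using contraction_inner_diff_le[OF assms(1), of s w \<eta>]
      mult_left_mono[OF \<open>(norm w)\<^sup>2 \<le> (2 * N)\<^sup>2\<close> zero_le_power2[of s]]
      mult_left_mono[OF \<open>E w \<bullet> E \<eta> \<le> \<gamma> * N * N\<close>, of "2 * s"] \<open>s > 0\<close>
    by linarith
  also have "\<dots> = 2 * s * ((2 * s + \<delta> / s + \<gamma>) * N\<^sup>2)"
    using \<open>s > 0\<close> by (simp add: field_simps power2_eq_square)
  finally have "w \<bullet> \<eta> \<le> (2 * s + \<delta> / s + \<gamma>) * N\<^sup>2"
    using \<open>s > 0\<close> by simp
  with T\<eta> show ?thesis by (simp only: mult.assoc)
qed

lemma contractions_compose_diff_sq_le:
  fixes E T :: "'a::real_inner \<Rightarrow>\<^sub>L 'a" and P :: "'b::real_normed_vector \<Rightarrow>\<^sub>L 'a"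
  assumes "norm E \<le> 1" "norm T \<le> 1" "norm P \<le> 1"
    and EP: "norm ((E o\<^sub>L P) - P) \<le> \<delta>" and ET: "norm ((E o\<^sub>L T) - E) \<le> \<gamma>" and "s > 0"
  shows "(norm ((T o\<^sub>L P) - P))\<^sup>2 \<le> 2 * (2 * s + \<delta> / s + \<gamma>)"
proof -
  define c where "c = 2 * (2 * s + \<delta> / s + \<gamma>)"
  have "0 \<le> \<delta>" "0 \<le> \<gamma>" using EP ET norm_ge_zero order_trans by blast+
  then have "0 \<le> c" using \<open>s > 0\<close> by (simp add: c_def)
  have "norm (((T o\<^sub>L P) - P) \<xi>) \<le> sqrt c * norm \<xi>" for \<xi>
  proof -
    have P\<xi>: "norm (P \<xi>) \<le> norm \<xi>"
      using \<open>norm P \<le> 1\<close> by (rule norm_blinfun_contraction)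
    have EP\<xi>: "norm (E (P \<xi>) - P \<xi>) \<le> \<delta> * norm \<xi>"
      using norm_blinfun[of "(E o\<^sub>L P) - P" \<xi>] mult_right_mono[OF EP norm_ge_zero[of \<xi>]]
      by (simp add: blinfun.diff_left)
    have ETP\<xi>: "norm (E (T (P \<xi>)) - E (P \<xi>)) \<le> \<gamma> * norm \<xi>"
      using norm_blinfun[of "(E o\<^sub>L T) - E" "P \<xi>"] mult_mono[OF ET P\<xi>] \<open>0 \<le> \<gamma>\<close>
      by (simp add: blinfun.diff_left)
    have "(norm (T (P \<xi>) - P \<xi>))\<^sup>2 \<le> c * (norm \<xi>)\<^sup>2"
      unfolding c_def using \<open>norm E \<le> 1\<close> \<open>norm T \<le> 1\<close> P\<xi> EP\<xi> ETP\<xi> \<open>s > 0\<close>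
      by (rule contraction_almost_fixes)
    then have "norm (T (P \<xi>) - P \<xi>) \<le> sqrt (c * (norm \<xi>)\<^sup>2)" by (rule real_le_rsqrt)
    then show ?thesis by (simp add: real_sqrt_mult blinfun.diff_left)
  qed
  then have "norm ((T o\<^sub>L P) - P) \<le> sqrt c"
    using \<open>0 \<le> c\<close> by (intro norm_blinfun_bound) auto
  then have "(norm ((T o\<^sub>L P) - P))\<^sup>2 \<le> (sqrt c)\<^sup>2" by (intro power_mono) auto
  then show ?thesis using \<open>0 \<le> c\<close> by (simp add: c_def)
qed

lemma contractions_uniform_transfer:
  assumes "\<epsilon> > 0"
  obtains \<delta> \<gamma> where "\<delta> > 0" "\<gamma> > 0"
    "\<And>(E :: 'a::real_inner \<Rightarrow>\<^sub>L 'a) T (P :: 'b::real_normed_vector \<Rightarrow>\<^sub>L 'a).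
      norm E \<le> 1 \<Longrightarrow> norm T \<le> 1 \<Longrightarrow> norm P \<le> 1 \<Longrightarrow>
      norm ((E o\<^sub>L P) - P) \<le> \<delta> \<Longrightarrow> norm ((E o\<^sub>L T) - E) \<le> \<gamma> \<Longrightarrow>
      norm ((T o\<^sub>L P) - P) < \<epsilon>"
proof -
  define s where "s = \<epsilon>\<^sup>2 / 16"
  define \<delta> where "\<delta> = s * \<epsilon>\<^sup>2 / 8"
  define \<gamma> where "\<gamma> = \<epsilon>\<^sup>2 / 8"
  have "s > 0" "\<delta> > 0" "\<gamma> > 0" using assms by (simp_all add: s_def \<delta>_def \<gamma>_def)
  have bound: "2 * (2 * s + \<delta> / s + \<gamma>) < \<epsilon>\<^sup>2"
    using \<open>s > 0\<close> assms by (simp add: \<delta>_def \<gamma>_def s_def field_simps)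
  show thesis
  proof (rule that[OF \<open>\<delta> > 0\<close> \<open>\<gamma> > 0\<close>])
    fix E T :: "'a \<Rightarrow>\<^sub>L 'a" and P :: "'b \<Rightarrow>\<^sub>L 'a"
    assume "norm E \<le> 1" "norm T \<le> 1" "norm P \<le> 1"
      "norm ((E o\<^sub>L P) - P) \<le> \<delta>" "norm ((E o\<^sub>L T) - E) \<le> \<gamma>"
    then have "(norm ((T o\<^sub>L P) - P))\<^sup>2 \<le> 2 * (2 * s + \<delta> / s + \<gamma>)"
      using \<open>s > 0\<close> by (rule contractions_compose_diff_sq_le)
    also note bound
    finally show "norm ((T o\<^sub>L P) - P) < \<epsilon>"
      using assms by (simp add: power2_less_imp_less)
  qed
qed

lemma left_approx_unit_transfer:
  fixes e :: "'i \<Rightarrow> 'a::real_inner \<Rightarrow>\<^sub>L 'a" and f :: "'j \<Rightarrow> 'a \<Rightarrow>\<^sub>L 'a"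
    and p :: "'b::real_normed_vector \<Rightarrow>\<^sub>L 'a"
  assumes "F \<noteq> bot" "\<And>i. norm (e i) \<le> 1" "\<And>k. norm (f k) \<le> 1" "norm p \<le> 1"
    and ef: "\<And>i. ((\<lambda>k. e i o\<^sub>L f k) \<longlongrightarrow> e i) G"
    and ep: "((\<lambda>i. e i o\<^sub>L p) \<longlongrightarrow> p) F"
  shows "((\<lambda>k. f k o\<^sub>L p) \<longlongrightarrow> p) G"
proof (rule tendstoI)
  fix \<epsilon> :: real assume "\<epsilon> > 0"
  then obtain \<delta> \<gamma> where "\<delta> > 0" "\<gamma> > 0" and transfer:
    "\<And>(E :: 'a \<Rightarrow>\<^sub>L 'a) T (P :: 'b \<Rightarrow>\<^sub>L 'a). norm E \<le> 1 \<Longrightarrow> norm T \<le> 1 \<Longrightarrow> norm P \<le> 1 \<Longrightarrow>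
      norm ((E o\<^sub>L P) - P) \<le> \<delta> \<Longrightarrow> norm ((E o\<^sub>L T) - E) \<le> \<gamma> \<Longrightarrow> norm ((T o\<^sub>L P) - P) < \<epsilon>"
    using contractions_uniform_transfer[OF \<open>\<epsilon> > 0\<close>] by blast
  have "eventually (\<lambda>i. dist (e i o\<^sub>L p) p < \<delta>) F" using ep \<open>\<delta> > 0\<close> by (rule tendstoD)
  then obtain i where ei: "norm ((e i o\<^sub>L p) - p) < \<delta>"
    using \<open>F \<noteq> bot\<close> eventually_happens by (fastforce simp: dist_norm)
  have "eventually (\<lambda>k. dist (e i o\<^sub>L f k) (e i) < \<gamma>) G" using ef \<open>\<gamma> > 0\<close> by (rule tendstoD)
  then show "eventually (\<lambda>k. dist (f k o\<^sub>L p) p < \<epsilon>) G"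
  proof (rule eventually_mono)
    fix k assume "dist (e i o\<^sub>L f k) (e i) < \<gamma>"
    then show "dist (f k o\<^sub>L p) p < \<epsilon>"
      using transfer[OF assms(2)[of i] assms(3)[of k] assms(4)] ei by (simp add: dist_norm)
  qed
qed

lemma right_approx_unit_transfer:
  fixes e :: "'i \<Rightarrow> 'a::{real_inner,complete_space} \<Rightarrow>\<^sub>L 'a" and f :: "'j \<Rightarrow> 'a \<Rightarrow>\<^sub>L 'a"
    and p :: "'a \<Rightarrow>\<^sub>L 'b::{real_inner,complete_space}"
  assumes "F \<noteq> bot" "\<And>i. norm (e i) \<le> 1" "\<And>k. norm (f k) \<le> 1" "norm p \<le> 1"
    and fe: "\<And>i. ((\<lambda>k. f k o\<^sub>L e i) \<longlongrightarrow> e i) G"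
    and pe: "((\<lambda>i. p o\<^sub>L e i) \<longlongrightarrow> p) F"
  shows "((\<lambda>k. p o\<^sub>L f k) \<longlongrightarrow> p) G"
proof -
  note adj_tendsto = bounded_linear.tendsto[OF bounded_linear_blinfun_adj]
  have "((\<lambda>k. blinfun_adj (f k) o\<^sub>L blinfun_adj p) \<longlongrightarrow> blinfun_adj p) G"
  proof (rule left_approx_unit_transfer[OF \<open>F \<noteq> bot\<close>])
    show "norm (blinfun_adj (e i)) \<le> 1" "norm (blinfun_adj (f k)) \<le> 1"
      "norm (blinfun_adj p) \<le> 1" for i k
      using assms(2-4) norm_blinfun_adj_le order_trans by blast+
    show "((\<lambda>k. blinfun_adj (e i) o\<^sub>L blinfun_adj (f k)) \<longlongrightarrow> blinfun_adj (e i)) G" for i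
      using adj_tendsto[OF fe] by (simp add: blinfun_adj_compose)
    show "((\<lambda>i. blinfun_adj (e i) o\<^sub>L blinfun_adj p) \<longlongrightarrow> blinfun_adj p) F"
      using adj_tendsto[OF pe] by (simp add: blinfun_adj_compose)
  qed
  from adj_tendsto[OF this] show ?thesis by (simp add: blinfun_adj_compose)
qed

lemma subspace_tendsto_fixed:
  fixes g :: "'i \<Rightarrow> 'a::real_normed_vector \<Rightarrow> 'a"
  assumes "\<And>k. linear (g k)"
  shows "subspace {x. ((\<lambda>k. g k x) \<longlongrightarrow> x) G}"
  using assms by (auto simp: subspace_def linear_add linear_scale linear_0
      intro!: tendsto_add tendsto_scaleR tendsto_const)

lemma closed_tendsto_fixed:
  fixes g :: "'i \<Rightarrow> 'a::real_normed_vector \<Rightarrow> 'a"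
  assumes "\<And>k. linear (g k)" and bound: "\<And>k x. norm (g k x) \<le> K * norm x"
  shows "closed {x. ((\<lambda>k. g k x) \<longlongrightarrow> x) G}"
proof (rule closed_sequential_limits[THEN iffD2], intro allI impI, elim conjE)
  fix y x assume y: "\<forall>n. y n \<in> {x. ((\<lambda>k. g k x) \<longlongrightarrow> x) G}" and "y \<longlonglongrightarrow> x"
  show "x \<in> {x. ((\<lambda>k. g k x) \<longlongrightarrow> x) G}"
  proof (simp, rule tendstoI)
    fix \<epsilon> :: real assume "\<epsilon> > 0"
    define C where "C = \<bar>K\<bar> + 2"
    have "C > 0" by (simp add: C_def)
    define \<rho> where "\<rho> = \<epsilon> / C"
    have "\<rho> > 0" using \<open>C > 0\<close> \<open>\<epsilon> > 0\<close> by (simp add: \<rho>_def)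
    with \<open>y \<longlonglongrightarrow> x\<close> have "eventually (\<lambda>n. dist (y n) x < \<rho>) sequentially"
      by (intro tendstoD) auto
    then obtain n where n: "norm (y n - x) < \<rho>"
      by (auto simp: eventually_sequentially dist_norm)
    have "eventually (\<lambda>k. dist (g k (y n)) (y n) < \<rho>) G"
      using y \<open>\<rho> > 0\<close> by (intro tendstoD) auto
    then show "eventually (\<lambda>k. dist (g k x) x < \<epsilon>) G"
    proof (rule eventually_mono)
      fix k assume k: "dist (g k (y n)) (y n) < \<rho>"
      have split: "g k x - x = g k (x - y n) + (g k (y n) - y n) + (y n - x)"
        using assms(1) by (simp add: linear_diff)
      have "norm (g k x - x) \<le> norm (g k (x - y n)) + norm (g k (y n) - y n) + norm (y n - x)"
        using norm_triangle_ineq[of "g k (x - y n) + (g k (y n) - y n)" "y n - x"]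
          norm_triangle_ineq[of "g k (x - y n)" "g k (y n) - y n"] unfolding split by linarith
      also have "\<dots> \<le> \<bar>K\<bar> * norm (y n - x) + norm (g k (y n) - y n) + norm (y n - x)"
        using bound[of k "x - y n"] mult_right_mono[OF abs_ge_self[of K] norm_ge_zero[of "x - y n"]]
        by (simp add: norm_minus_commute)
      also have "\<dots> < \<bar>K\<bar> * \<rho> + \<rho> + \<rho>"
        using n k by (intro add_strict_mono add_le_less_mono mult_left_mono) (auto simp: dist_norm)
      also have "\<dots> = C * \<rho>" by (simp add: C_def algebra_simps)
      also have "\<dots> = \<epsilon>" using \<open>C > 0\<close> by (simp add: \<rho>_def)
      finally show "dist (g k x) x < \<epsilon>" by (simp add: dist_norm)
    qed
  qed
qed

lemma norm_blinfun_compose_contraction_left: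
  assumes "norm a \<le> 1" shows "norm (a o\<^sub>L x) \<le> norm x"
  using norm_blinfun_compose[of a x] mult_right_mono[OF assms norm_ge_zero[of x]] by linarith

lemma norm_blinfun_compose_contraction_right:
  assumes "norm a \<le> 1" shows "norm (x o\<^sub>L a) \<le> norm x"
  using norm_blinfun_compose[of x a] mult_left_mono[OF assms norm_ge_zero[of x]] by linarith

lemma blinfun_compose_assoc: "(a o\<^sub>L b) o\<^sub>L c = a o\<^sub>L (b o\<^sub>L c)"
  by (rule blinfun_eqI) simp

lemma linear_blinfun_compose_left: "linear (\<lambda>x. a o\<^sub>L x)"
  by (rule bounded_linear.linear[OF bounded_bilinear.bounded_linear_right[OF bounded_bilinear_blinfun_compose]])

lemma linear_blinfun_compose_right: "linear (\<lambda>x. x o\<^sub>L a)"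
  by (rule bounded_linear.linear[OF bounded_bilinear.bounded_linear_left[OF bounded_bilinear_blinfun_compose]])

lemma setprod_subset:
  assumes "\<And>x y. x \<in> X \<Longrightarrow> y \<in> Y \<Longrightarrow> x o\<^sub>L y \<in> S" "csubspace J S" "closed S"
  shows "setprod J X Y \<subseteq> S"
  unfolding setprod_def cspan_def using assms unfolding csubspace_def
  by (intro closure_minimal span_minimal) auto

lemma limit_in_setprod:
  assumes "F \<noteq> bot" "((\<lambda>i. x i o\<^sub>L y i) \<longlongrightarrow> l) F" "\<And>i. x i \<in> X" "\<And>i. y i \<in> Y"
  shows "l \<in> setprod J X Y"
proof (rule Lim_in_closed_set[OF _ _ assms(1,2)])
  show "closed (setprod J X Y)" by (simp add: setprod_def)
  have "x i o\<^sub>L y i \<in> setprod J X Y" for i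
    unfolding setprod_def cspan_def using assms(3,4)
    by (intro closure_subset[THEN subsetD] span_base) blast
  then show "eventually (\<lambda>i. x i o\<^sub>L y i \<in> setprod J X Y) F" by simp
qed

lemma operator_algebra_subalgebra:
  assumes "operator_algebra J A" "R \<subseteq> A" "csubspace J R" "closed R"
    and "\<And>x y. x \<in> R \<Longrightarrow> y \<in> R \<Longrightarrow> x o\<^sub>L y \<in> R"
  shows "operator_algebra J R"
  using assms by (auto simp: operator_algebra_def)

lemma two_sided_cai_reindex:
  fixes e :: "'i \<Rightarrow> 'h::{real_inner,complete_space} \<Rightarrow>\<^sub>L 'h"
  assumes "two_sided_cai R F e"
  shows "\<exists>(G :: ('h \<Rightarrow>\<^sub>L 'h) filter) f. two_sided_cai R G f"
proof -
  \<comment> \<open>the required index type is the operator type: index the net by its own values\<close>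
  define g where "g T = (if T \<in> range e then T else e undefined)" for T
  have "g (e i) = e i" for i by (simp add: g_def)
  moreover have "g T \<in> R \<and> norm (g T) \<le> 1" for T
    using assms by (auto simp: g_def two_sided_cai_def right_cai_def)
  moreover have "filtermap e F \<noteq> bot"
    using assms by (simp add: filtermap_bot_iff two_sided_cai_def right_cai_def)
  ultimately have "two_sided_cai R (filtermap e F) g"
    using assms by (simp add: two_sided_cai_def right_cai_def left_cai_def filterlim_filtermap)
  then show ?thesis by blast
qed

lemma RR_eq: "RR A F e = A \<inter> {x. ((\<lambda>i. e i o\<^sub>L x) \<longlongrightarrow> x) F}"
  by (auto simp: RR_def)

lemma LL_eq: "LL A F e = A \<inter> {x. ((\<lambda>i. x o\<^sub>L e i) \<longlongrightarrow> x) F}"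
  by (auto simp: LL_def)

lemma closed_RR:
  assumes "operator_algebra J A" "propR A F e"
  shows "closed (RR A F e)"
proof -
  have "closed A" "\<And>i. norm (e i) \<le> 1"
    using assms by (auto simp: operator_algebra_def propR_def right_cai_def)
  then show ?thesis
    unfolding RR_eq by (intro closed_Int closed_tendsto_fixed[where K=1]
        linear_blinfun_compose_left) (simp_all add: norm_blinfun_compose_contraction_left)
qed

lemma closed_LL:
  assumes "operator_algebra J A" "propL A F e"
  shows "closed (LL A F e)"
proof -
  have "closed A" "\<And>i. norm (e i) \<le> 1"
    using assms by (auto simp: operator_algebra_def propL_def left_cai_def)
  then show ?thesis
    unfolding LL_eq by (intro closed_Int closed_tendsto_fixed[where K=1]
        linear_blinfun_compose_right) (simp_all add: norm_blinfun_compose_contraction_right)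
qed

lemma right_ideal_RR:
  assumes A: "operator_algebra J A" and "propR A F e"
  shows "right_ideal J A (RR A F e)"
proof -
  have "e i o\<^sub>L J = J o\<^sub>L e i" for i
    using assms by (auto simp: operator_algebra_def cops_def propR_def right_cai_def)
  then have J_comm: "e i o\<^sub>L (J o\<^sub>L x) = J o\<^sub>L (e i o\<^sub>L x)" for i x
    by (simp flip: blinfun_compose_assoc)
  have "J o\<^sub>L x \<in> RR A F e" if "x \<in> RR A F e" for x
    using A that by (auto simp: RR_def operator_algebra_def csubspace_def J_comm intro: tendsto_intros)
  moreover have "subspace (RR A F e)"
    unfolding RR_eq using A
    by (intro subspace_inter subspace_tendsto_fixed linear_blinfun_compose_left)
      (simp add: operator_algebra_def csubspace_def)
  moreover have "x o\<^sub>L a \<in> RR A F e" if "x \<in> RR A F e" "a \<in> A" for x a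
  proof -
    have "((\<lambda>i. (e i o\<^sub>L x) o\<^sub>L a) \<longlongrightarrow> x o\<^sub>L a) F"
      using that by (intro tendsto_intros) (simp add: RR_def)
    then show ?thesis
      using that A by (simp add: RR_def operator_algebra_def blinfun_compose_assoc)
  qed
  ultimately show ?thesis by (auto simp: right_ideal_def csubspace_def RR_def)
qed

lemma left_ideal_LL:
  assumes A: "operator_algebra J A"
  shows "left_ideal J A (LL A F e)"
proof -
  have "a o\<^sub>L x \<in> LL A F e" if "x \<in> LL A F e" "a \<in> A" for x a
  proof -
    have "((\<lambda>i. a o\<^sub>L (x o\<^sub>L e i)) \<longlongrightarrow> a o\<^sub>L x) F"
      using that by (intro tendsto_intros) (simp add: LL_def)
    then show ?thesis
      using that A by (simp add: LL_def operator_algebra_def blinfun_compose_assoc)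
  qed
  moreover have "J o\<^sub>L x \<in> LL A F e" if "x \<in> LL A F e" for x
    using A that by (auto simp: LL_def operator_algebra_def csubspace_def blinfun_compose_assoc
        intro: tendsto_intros)
  moreover have "subspace (LL A F e)"
    unfolding LL_eq using A
    by (intro subspace_inter subspace_tendsto_fixed linear_blinfun_compose_right)
      (simp add: operator_algebra_def csubspace_def)
  ultimately show ?thesis by (auto simp: left_ideal_def csubspace_def LL_def)
qed

lemma RR_subset_RR:
  fixes e :: "'i \<Rightarrow> 'h::{real_inner,complete_space} \<Rightarrow>\<^sub>L 'h"
  assumes e: "propR A F e" and f: "propR A G f"
  shows "RR A F e \<subseteq> RR A G f"
proof
  fix x assume x: "x \<in> RR A F e"
  have "F \<noteq> bot" and e_norm: "\<And>i. norm (e i) \<le> 1" and f_norm: "\<And>k. norm (f k) \<le> 1"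
    and ef: "\<And>i. ((\<lambda>k. e i o\<^sub>L f k) \<longlongrightarrow> e i) G"
    and ee: "\<And>j. ((\<lambda>i. e i o\<^sub>L e j) \<longlongrightarrow> e j) F"
    using e f by (auto simp: propR_def right_cai_def)
  have fe: "((\<lambda>k. f k o\<^sub>L e j) \<longlongrightarrow> e j) G" for j
    using \<open>F \<noteq> bot\<close> e_norm f_norm e_norm ef ee by (rule left_approx_unit_transfer)
  define S where "S = {y :: 'h \<Rightarrow>\<^sub>L 'h. ((\<lambda>k. f k o\<^sub>L y) \<longlongrightarrow> y) G}"
  have "closed S"
    unfolding S_def using f_norm
    by (intro closed_tendsto_fixed[where K=1] linear_blinfun_compose_left)
      (simp add: norm_blinfun_compose_contraction_left)
  moreover have "e j o\<^sub>L x \<in> S" for j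
  proof -
    have "((\<lambda>k. (f k o\<^sub>L e j) o\<^sub>L x) \<longlongrightarrow> e j o\<^sub>L x) G"
      by (intro tendsto_intros fe)
    then show ?thesis by (simp add: S_def blinfun_compose_assoc)
  qed
  ultimately have "x \<in> S"
    using x \<open>F \<noteq> bot\<close> by (intro Lim_in_closed_set[where f="\<lambda>j. e j o\<^sub>L x"]) (auto simp: RR_def)
  then show "x \<in> RR A G f" using x by (simp add: RR_def S_def)
qed

lemma LL_subset_LL:
  fixes e :: "'i \<Rightarrow> 'h::{real_inner,complete_space} \<Rightarrow>\<^sub>L 'h"
  assumes e: "propL A F e" and f: "propL A G f"
  shows "LL A F e \<subseteq> LL A G f"
proof
  fix x assume x: "x \<in> LL A F e"
  have "F \<noteq> bot" and e_norm: "\<And>i. norm (e i) \<le> 1" and f_norm: "\<And>k. norm (f k) \<le> 1"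
    and fe: "\<And>i. ((\<lambda>k. f k o\<^sub>L e i) \<longlongrightarrow> e i) G"
    and ee: "\<And>j. ((\<lambda>i. e j o\<^sub>L e i) \<longlongrightarrow> e j) F"
    using e f by (auto simp: propL_def left_cai_def)
  have ef: "((\<lambda>k. e j o\<^sub>L f k) \<longlongrightarrow> e j) G" for j
    using \<open>F \<noteq> bot\<close> e_norm f_norm e_norm fe ee by (rule right_approx_unit_transfer)
  define S where "S = {y :: 'h \<Rightarrow>\<^sub>L 'h. ((\<lambda>k. y o\<^sub>L f k) \<longlongrightarrow> y) G}"
  have "closed S"
    unfolding S_def using f_norm
    by (intro closed_tendsto_fixed[where K=1] linear_blinfun_compose_right)
      (simp add: norm_blinfun_compose_contraction_right)
  moreover have "x o\<^sub>L e j \<in> S" for j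
  proof -
    have "((\<lambda>k. x o\<^sub>L (e j o\<^sub>L f k)) \<longlongrightarrow> x o\<^sub>L e j) G"
      using ef by (intro tendsto_intros)
    then show ?thesis by (simp add: S_def blinfun_compose_assoc)
  qed
  ultimately have "x \<in> S"
    using x \<open>F \<noteq> bot\<close> by (intro Lim_in_closed_set[where f="\<lambda>j. x o\<^sub>L e j"]) (auto simp: LL_def)
  then show "x \<in> LL A G f" using x by (simp add: LL_def S_def)
qed

lemma RR_eq_RR:
  fixes e :: "'i \<Rightarrow> 'h::{real_inner,complete_space} \<Rightarrow>\<^sub>L 'h" and f :: "'j \<Rightarrow> 'h \<Rightarrow>\<^sub>L 'h"
  assumes "propR A F e" "propR A G f"
  shows "RR A G f = RR A F e"
  using assms by (intro equalityI RR_subset_RR)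

lemma LL_eq_LL:
  fixes e :: "'i \<Rightarrow> 'h::{real_inner,complete_space} \<Rightarrow>\<^sub>L 'h" and f :: "'j \<Rightarrow> 'h \<Rightarrow>\<^sub>L 'h"
  assumes "propL A F e" "propL A G f"
  shows "LL A G f = LL A F e"
  using assms by (intro equalityI LL_subset_LL)

lemma two_sided_cai_RR:
  assumes "propR A F e"
  shows "two_sided_cai (RR A F e) F e"
  using assms by (auto simp: two_sided_cai_def right_cai_def left_cai_def propR_def RR_def)

lemma two_sided_cai_LL:
  assumes "propL A F e"
  shows "two_sided_cai (LL A F e) F e"
  using assms by (auto simp: two_sided_cai_def right_cai_def left_cai_def propL_def LL_def)

lemma operator_algebra_RR:
  assumes "operator_algebra J A" "propR A F e"
  shows "operator_algebra J (RR A F e)"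
  using right_ideal_RR[OF assms] closed_RR[OF assms]
  by (intro operator_algebra_subalgebra[OF assms(1)]) (auto simp: right_ideal_def)

lemma operator_algebra_LL:
  assumes "operator_algebra J A" "propL A F e"
  shows "operator_algebra J (LL A F e)"
  using left_ideal_LL[OF assms(1), of F e] closed_LL[OF assms]
  by (intro operator_algebra_subalgebra[OF assms(1)]) (auto simp: left_ideal_def)

lemma setprod_A_RR:
  assumes "operator_algebra J A" "propR A F e"
  shows "setprod J A (RR A F e) = A"
proof
  show "setprod J A (RR A F e) \<subseteq> A"
    using assms by (intro setprod_subset) (auto simp: operator_algebra_def RR_def)
  show "A \<subseteq> setprod J A (RR A F e)"
  proof
    fix a assume "a \<in> A"
    with assms(2) show "a \<in> setprod J A (RR A F e)"
      by (intro limit_in_setprod[where x="\<lambda>_. a" and y=e and F=F])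
        (auto simp: propR_def right_cai_def RR_def)
  qed
qed

lemma setprod_RR_A:
  assumes "operator_algebra J A" "propR A F e"
  shows "setprod J (RR A F e) A = RR A F e"
proof
  show "setprod J (RR A F e) A \<subseteq> RR A F e"
    using right_ideal_RR[OF assms] closed_RR[OF assms]
    by (intro setprod_subset) (auto simp: right_ideal_def)
  show "RR A F e \<subseteq> setprod J (RR A F e) A"
  proof
    fix r assume "r \<in> RR A F e"
    with assms(2) show "r \<in> setprod J (RR A F e) A"
      by (intro limit_in_setprod[where x=e and y="\<lambda>_. r" and F=F])
        (auto simp: propR_def right_cai_def RR_def)
  qed
qed

lemma setprod_LL_A:
  assumes "operator_algebra J A" "propL A F e"
  shows "setprod J (LL A F e) A = A"
proof
  show "setprod J (LL A F e) A \<subseteq> A"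
    using assms by (intro setprod_subset) (auto simp: operator_algebra_def LL_def)
  show "A \<subseteq> setprod J (LL A F e) A"
  proof
    fix a assume "a \<in> A"
    with assms(2) show "a \<in> setprod J (LL A F e) A"
      by (intro limit_in_setprod[where x=e and y="\<lambda>_. a" and F=F])
        (auto simp: propL_def left_cai_def LL_def)
  qed
qed

lemma setprod_A_LL:
  assumes "operator_algebra J A" "propL A F e"
  shows "setprod J A (LL A F e) = LL A F e"
proof
  show "setprod J A (LL A F e) \<subseteq> LL A F e"
    using left_ideal_LL[OF assms(1), of F e] closed_LL[OF assms]
    by (intro setprod_subset) (auto simp: left_ideal_def)
  show "LL A F e \<subseteq> setprod J A (LL A F e)"
  proof
    fix r assume "r \<in> LL A F e"
    with assms(2) show "r \<in> setprod J A (LL A F e)"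
      by (intro limit_in_setprod[where x="\<lambda>_. r" and y=e and F=F])
        (auto simp: propL_def left_cai_def LL_def)
  qed
qed

theorem proposition2p3:
  fixes J :: "'h::{real_inner,complete_space} \<Rightarrow>\<^sub>L 'h"
    and A :: "('h \<Rightarrow>\<^sub>L 'h) set"
    and F :: "'i filter" and e :: "'i \<Rightarrow> ('h \<Rightarrow>\<^sub>L 'h)"
  assumes "operator_algebra J A"
  shows "(propR A F e \<longrightarrow>
            right_ideal J A (RR A F e) \<and> closed (RR A F e) \<and> operator_algebra J (RR A F e)
          \<and> (\<exists>(G :: ('h \<Rightarrow>\<^sub>L 'h) filter) f. two_sided_cai (RR A F e) G f)
          \<and> (\<forall>(G :: 'j filter) f. propR A G f \<longrightarrow> RR A G f = RR A F e)
          \<and> setprod J A (RR A F e) = A \<and> setprod J (RR A F e) A = RR A F e)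
       \<and> (propL A F e \<longrightarrow>
            left_ideal J A (LL A F e) \<and> closed (LL A F e) \<and> operator_algebra J (LL A F e)
          \<and> (\<exists>(G :: ('h \<Rightarrow>\<^sub>L 'h) filter) f. two_sided_cai (LL A F e) G f)
          \<and> (\<forall>(G :: 'j filter) f. propL A G f \<longrightarrow> LL A G f = LL A F e)
          \<and> setprod J (LL A F e) A = A \<and> setprod J A (LL A F e) = LL A F e)"
  using assms
  by (intro conjI impI allI)
    (assumption | rule right_ideal_RR closed_RR operator_algebra_RR RR_eq_RR setprod_A_RR
      setprod_RR_A left_ideal_LL closed_LL operator_algebra_LL LL_eq_LL setprod_LL_A setprod_A_LL
      two_sided_cai_reindex two_sided_cai_RR two_sided_cai_LL)+

end
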